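(* Let $G$ be a finite group. If $G=H\,Z(G)$ for some subgroup $H$ of $G$, then $\mathcal{CD}(G)$ and $\mathcal{CD}(H)$ are isomorphic as lattices, and $\mathcal{CD}(G)=\{X Z(G)\mid X\in\mathcal{CD}(H)\}$.
   Context: For a finite group $G$ and $H\le G$, $m_G(H)=|H|\,|C_G(H)|$, $m^*(G)=\max\{m_G(H)\mid H\le G\}$, and the Chermak-Delgado lattice is $\mathcal{CD}(G)=\{H\le G\mid m_G(H)=m^*(G)\}$, a sublattice of the subgroup lattice of $G$. *)

theory Defs
  imports "HOL-Algebra.Algebra"
begin

definition centralizer :: "('a, 'b) monoid_scheme \<Rightarrow> 'a set \<Rightarrow> 'a set" where
  "centralizer G S = {g \<in> carrier G. \<forall>h\<in>S. g \<otimes>\<^bsub>G\<^esub> h = h \<otimes>\<^bsub>G\<^esub> g}"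

definition center :: "('a, 'b) monoid_scheme \<Rightarrow> 'a set" where
  "center G = centralizer G (carrier G)"

definition cd_measure :: "('a, 'b) monoid_scheme \<Rightarrow> 'a set \<Rightarrow> nat" where
  "cd_measure G S = card S * card (centralizer G S)"

definition cd_max :: "('a, 'b) monoid_scheme \<Rightarrow> nat" where
  "cd_max G = Max (cd_measure G ` {K. subgroup K G})"

definition CD :: "('a, 'b) monoid_scheme \<Rightarrow> 'a set set" where
  "CD G = {K. subgroup K G \<and> cd_measure G K = cd_max G}"

definition subgroup_lattice_iso ::
  "('a, 'b) monoid_scheme \<Rightarrow> ('c, 'd) monoid_scheme \<Rightarrow> 'a set set \<Rightarrow> 'c set set \<Rightarrow> ('a set \<Rightarrow> 'c set) \<Rightarrow> bool" where
  "subgroup_lattice_iso G1 G2 A B f \<longleftrightarrow>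
     bij_betw f A B \<and>
     (\<forall>U\<in>A. \<forall>V\<in>A. f (U \<inter> V) = f U \<inter> f V \<and>
        f (generate G1 (U \<union> V)) = generate G2 (f U \<union> f V))"

end

theory Submission
  imports Defs
begin

(* Write Z = Z(G). By Dedekind's modular law every subgroup K of G containing Z is
   (K \<inter> H) Z, and for L \<le> H the centralizer C_G(L) is C_H(L) Z. The product formula
   |A B| |A \<inter> B| = |A| |B| then gives m_G(K) |Z \<inter> H|^2 = m_H(K \<inter> H) |Z|^2, and since the
   members of a Chermak-Delgado lattice contain the centre, m*(G) |Z \<inter> H|^2 = m*(H) |Z|^2.
   So K \<mapsto> K \<inter> H maps CD(G) bijectively onto CD(H) with inverse L \<mapsto> L Z; it
   preserves joins because the subgroup generated by U \<union> V lies in S Z, where S is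
   generated by (U \<inter> H) \<union> (V \<inter> H), and (S Z) \<inter> H = S. *)

lemma centralizer_restrict:
  "H \<subseteq> carrier G \<Longrightarrow> centralizer (G\<lparr>carrier := H\<rparr>) S = centralizer G S \<inter> H"
  unfolding centralizer_def by auto

context group begin

lemma centralizer_subset_carrier: "centralizer G S \<subseteq> carrier G"
  unfolding centralizer_def by auto

lemma centralizer_subgroup:
  assumes "S \<subseteq> carrier G"
  shows "subgroup (centralizer G S) G"
proof (rule subgroupI)
  show "centralizer G S \<subseteq> carrier G" by (rule centralizer_subset_carrier)
  show "centralizer G S \<noteq> {}"
    using assms unfolding centralizer_def by (auto intro!: exI[of _ \<one>])
next
  fix a assume a: "a \<in> centralizer G S"
  then have ac: "a \<in> carrier G" by (simp add: centralizer_def)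
  have "inv a \<otimes> h = h \<otimes> inv a" if h: "h \<in> S" for h
  proof -
    have hc: "h \<in> carrier G" using h assms by auto
    have "inv a \<otimes> h = inv a \<otimes> (h \<otimes> a) \<otimes> inv a" using ac hc by (simp add: m_assoc)
    also have "\<dots> = inv a \<otimes> (a \<otimes> h) \<otimes> inv a" using a h by (simp add: centralizer_def)
    also have "\<dots> = h \<otimes> inv a" using ac hc by (simp add: m_assoc[symmetric])
    finally show ?thesis .
  qed
  then show "inv a \<in> centralizer G S" using ac by (simp add: centralizer_def)
next
  fix a b assume a: "a \<in> centralizer G S" and b: "b \<in> centralizer G S"
  then have ac: "a \<in> carrier G" and bc: "b \<in> carrier G" by (simp_all add: centralizer_def)
  have "a \<otimes> b \<otimes> h = h \<otimes> (a \<otimes> b)" if h: "h \<in> S" for h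
  proof -
    have hc: "h \<in> carrier G" using h assms by auto
    have "a \<otimes> b \<otimes> h = a \<otimes> (h \<otimes> b)" using b h ac bc hc by (simp add: centralizer_def m_assoc)
    also have "\<dots> = (a \<otimes> h) \<otimes> b" using ac bc hc by (simp add: m_assoc)
    also have "\<dots> = h \<otimes> (a \<otimes> b)" using a h ac bc hc by (simp add: centralizer_def m_assoc)
    finally show ?thesis .
  qed
  then show "a \<otimes> b \<in> centralizer G S" using ac bc by (simp add: centralizer_def)
qed

lemma center_subgroup: "subgroup (center G) G"
  unfolding center_def by (rule centralizer_subgroup) simp

lemma center_commute: "z \<in> center G \<Longrightarrow> g \<in> carrier G \<Longrightarrow> z \<otimes> g = g \<otimes> z"
  unfolding center_def centralizer_def by auto

lemma center_subset_centralizer: "S \<subseteq> carrier G \<Longrightarrow> center G \<subseteq> centralizer G S"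
  unfolding center_def centralizer_def by auto

lemma center_normal: "center G \<lhd> G"
proof (rule normalI[OF center_subgroup], intro ballI)
  fix x assume "x \<in> carrier G"
  then show "center G #> x = x <# center G"
    unfolding r_coset_def l_coset_def using center_commute by fastforce
qed

lemma set_mult_center_subgroup: "subgroup K G \<Longrightarrow> subgroup (K <#> center G) G"
  using commut_normal[OF _ center_normal] mult_norm_subgroup[OF center_normal] by simp

lemma subset_set_mult_left: "A \<subseteq> carrier G \<Longrightarrow> \<one> \<in> B \<Longrightarrow> A \<subseteq> A <#> B"
  unfolding set_mult_def by force

lemma subset_set_mult_right: "B \<subseteq> carrier G \<Longrightarrow> \<one> \<in> A \<Longrightarrow> B \<subseteq> A <#> B"
  unfolding set_mult_def by force

lemma centralizer_set_mult_center:
  assumes "K \<subseteq> carrier G"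
  shows "centralizer G (K <#> center G) = centralizer G K"
proof
  show "centralizer G (K <#> center G) \<subseteq> centralizer G K"
    using subset_set_mult_left[OF assms subgroup.one_closed[OF center_subgroup]]
    unfolding centralizer_def by blast
next
  show "centralizer G K \<subseteq> centralizer G (K <#> center G)"
  proof
    fix g assume g: "g \<in> centralizer G K"
    then have gc: "g \<in> carrier G" by (simp add: centralizer_def)
    have "g \<otimes> (k \<otimes> z) = (k \<otimes> z) \<otimes> g" if k: "k \<in> K" and z: "z \<in> center G" for k z
    proof -
      have kc: "k \<in> carrier G" and zc: "z \<in> carrier G"
        using k z assms subgroup.subset[OF center_subgroup] by auto
      have "g \<otimes> (k \<otimes> z) = (k \<otimes> g) \<otimes> z"
        using g k gc kc zc by (simp add: centralizer_def m_assoc[symmetric])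
      also have "\<dots> = k \<otimes> (z \<otimes> g)" using center_commute[OF z gc] gc kc zc by (simp add: m_assoc)
      finally show ?thesis using gc kc zc by (simp add: m_assoc)
    qed
    then show "g \<in> centralizer G (K <#> center G)"
      using gc unfolding centralizer_def set_mult_def by auto
  qed
qed

lemma set_mult_fibre_eq_image:
  assumes A: "subgroup A G" and B: "subgroup B G" and a: "a \<in> A" and b: "b \<in> B"
  shows "{p \<in> A \<times> B. fst p \<otimes> snd p = a \<otimes> b} = (\<lambda>t. (a \<otimes> t, inv t \<otimes> b)) ` (A \<inter> B)"
    (is "?fibre = ?f ` _")
proof -
  have ac: "a \<in> carrier G" and bc: "b \<in> carrier G"
    using subgroup.mem_carrier[OF A a] subgroup.mem_carrier[OF B b] .
  show ?thesis
  proof (intro equalityI subsetI)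
    fix p assume "p \<in> ?fibre"
    then obtain x y where p: "p = (x, y)" and x: "x \<in> A" and y: "y \<in> B"
      and xy: "x \<otimes> y = a \<otimes> b"
      by auto
    have xc: "x \<in> carrier G" and yc: "y \<in> carrier G"
      using subgroup.mem_carrier[OF A x] subgroup.mem_carrier[OF B y] .
    define t where "t = inv a \<otimes> x"
    have "t = inv a \<otimes> (x \<otimes> y) \<otimes> inv y" using xc yc ac by (simp add: t_def m_assoc)
    also have "\<dots> = b \<otimes> inv y" using xy ac bc yc by (simp add: m_assoc[symmetric])
    finally have t_B: "t = b \<otimes> inv y" .
    have "t \<in> A" unfolding t_def using a x A by (simp add: subgroup.m_closed subgroup.m_inv_closed)
    moreover have "t \<in> B" unfolding t_B using b y B by (simp add: subgroup.m_closed subgroup.m_inv_closed)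
    moreover have "inv t \<otimes> b = y"
    proof -
      have "inv t \<otimes> b = inv x \<otimes> (a \<otimes> b)" using ac bc xc by (simp add: t_def inv_mult_group m_assoc)
      also have "\<dots> = y" using xy[symmetric] xc yc by (simp add: m_assoc[symmetric])
      finally show ?thesis .
    qed
    then have "p = ?f t" using p t_def ac xc by (simp add: m_assoc[symmetric])
    ultimately show "p \<in> ?f ` (A \<inter> B)" by blast
  next
    fix p assume "p \<in> ?f ` (A \<inter> B)"
    then obtain t where t: "t \<in> A" "t \<in> B" and p: "p = ?f t" by blast
    have "t \<in> carrier G" using subgroup.mem_carrier[OF A t(1)] .
    then have "a \<otimes> t \<otimes> (inv t \<otimes> b) = a \<otimes> b"
      using ac bc by (simp add: m_assoc[symmetric]) (simp add: m_assoc)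
    then show "p \<in> ?fibre"
      using p t a b A B by (simp add: subgroup.m_closed subgroup.m_inv_closed)
  qed
qed

lemma card_set_mult_fibre:
  assumes A: "subgroup A G" and B: "subgroup B G" and a: "a \<in> A" and b: "b \<in> B"
  shows "card {p \<in> A \<times> B. fst p \<otimes> snd p = a \<otimes> b} = card (A \<inter> B)"
proof -
  have "inj_on (\<lambda>t. (a \<otimes> t, inv t \<otimes> b)) (A \<inter> B)"
    using subgroup.mem_carrier[OF A a] subgroup.mem_carrier[OF A]
    by (auto intro!: inj_onI simp: l_cancel)
  then show ?thesis by (simp add: set_mult_fibre_eq_image[OF assms] card_image)
qed

lemma card_set_mult_Int:
  assumes A: "subgroup A G" and B: "subgroup B G" and "finite A" "finite B"
  shows "card (A <#> B) * card (A \<inter> B) = card A * card B"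
proof -
  let ?fibre = "\<lambda>w. {p \<in> A \<times> B. fst p \<otimes> snd p = w}"
  have fin: "finite (A <#> B)" using assms by (simp add: set_mult_def)
  have cover: "A \<times> B = (\<Union>w\<in>A <#> B. ?fibre w)" unfolding set_mult_def by (auto; blast)
  have "card A * card B = card (\<Union>w\<in>A <#> B. ?fibre w)"
    unfolding cover[symmetric] by (simp add: card_cartesian_product)
  also have "\<dots> = (\<Sum>w\<in>A <#> B. card (?fibre w))"
    using fin assms by (intro card_UN_disjoint) auto
  also have "\<dots> = (\<Sum>w\<in>A <#> B. card (A \<inter> B))"
    by (rule sum.cong) (auto simp: set_mult_def card_set_mult_fibre[OF A B])
  finally show ?thesis by simp
qed

lemma dedekind_modular_law_left:
  assumes C: "subgroup C G" and "A \<subseteq> C" and "B \<subseteq> carrier G"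
  shows "(A <#> B) \<inter> C = A <#> (B \<inter> C)"
proof
  show "(A <#> B) \<inter> C \<subseteq> A <#> (B \<inter> C)"
  proof
    fix w assume "w \<in> (A <#> B) \<inter> C"
    then obtain a b where a: "a \<in> A" and b: "b \<in> B" and w: "w = a \<otimes> b" "w \<in> C"
      unfolding set_mult_def by auto
    have "a \<in> carrier G" "b \<in> carrier G" using a b assms subgroup.subset[OF C] by auto
    then have "b = inv a \<otimes> w" using w by (simp add: m_assoc[symmetric])
    moreover have "inv a \<otimes> w \<in> C"
      using a w assms by (blast intro: subgroup.m_closed[OF C] subgroup.m_inv_closed[OF C])
    ultimately have "b \<in> C" by simp
    then show "w \<in> A <#> (B \<inter> C)" using a b w unfolding set_mult_def by blast
  qed
  show "A <#> (B \<inter> C) \<subseteq> (A <#> B) \<inter> C"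
    using assms subgroup.m_closed[OF C] unfolding set_mult_def by blast
qed

lemma dedekind_modular_law_right:
  assumes C: "subgroup C G" and "B \<subseteq> C" and "A \<subseteq> carrier G"
  shows "(A <#> B) \<inter> C = (A \<inter> C) <#> B"
proof
  show "(A <#> B) \<inter> C \<subseteq> (A \<inter> C) <#> B"
  proof
    fix w assume "w \<in> (A <#> B) \<inter> C"
    then obtain a b where a: "a \<in> A" and b: "b \<in> B" and w: "w = a \<otimes> b" "w \<in> C"
      unfolding set_mult_def by auto
    have "a \<in> carrier G" "b \<in> carrier G" using a b assms subgroup.subset[OF C] by auto
    then have "a = w \<otimes> inv b" using w by (simp add: m_assoc)
    moreover have "w \<otimes> inv b \<in> C"
      using b w assms by (blast intro: subgroup.m_closed[OF C] subgroup.m_inv_closed[OF C])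
    ultimately have "a \<in> C" by simp
    then show "w \<in> (A \<inter> C) <#> B" using a b w unfolding set_mult_def by blast
  qed
  show "(A \<inter> C) <#> B \<subseteq> (A <#> B) \<inter> C"
    using assms subgroup.m_closed[OF C] unfolding set_mult_def by blast
qed

lemma subgroup_restrict_iff:
  assumes "subgroup H G"
  shows "subgroup K (G\<lparr>carrier := H\<rparr>) \<longleftrightarrow> subgroup K G \<and> K \<subseteq> H"
  using incl_subgroup[OF assms] subgroup_incl[OF _ assms] subgroup.subset[of K "G\<lparr>carrier := H\<rparr>"]
  by auto

lemma finite_subgroups: "finite (carrier G) \<Longrightarrow> finite {K. subgroup K G}"
  by (rule finite_subset[of _ "Pow (carrier G)"]) (auto dest: subgroup.subset)

lemma cd_measure_le_cd_max: "finite (carrier G) \<Longrightarrow> subgroup K G \<Longrightarrow> cd_measure G K \<le> cd_max G"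
  unfolding cd_max_def by (rule Max_ge) (auto simp: finite_subgroups)

lemma CD_nonempty: "finite (carrier G) \<Longrightarrow> CD G \<noteq> {}"
proof -
  assume "finite (carrier G)"
  then have "cd_max G \<in> cd_measure G ` {K. subgroup K G}"
    unfolding cd_max_def by (intro Max_in) (auto simp: finite_subgroups intro: subgroup_self)
  then show ?thesis unfolding CD_def by auto
qed

lemma center_subset_CD:
  assumes fin: "finite (carrier G)" and "K \<in> CD G"
  shows "center G \<subseteq> K"
proof -
  have K: "subgroup K G" and K_max: "cd_measure G K = cd_max G"
    using assms unfolding CD_def by auto
  have Kc: "K \<subseteq> carrier G" using K subgroup.subset by auto
  let ?KZ = "K <#> center G"
  have KZ: "subgroup ?KZ G" using set_mult_center_subgroup[OF K] .
  have "finite ?KZ" using subgroup.subset[OF KZ] fin finite_subset by auto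
  have "K \<subseteq> ?KZ" using subset_set_mult_left[OF Kc subgroup.one_closed[OF center_subgroup]] .
  (* Multiplying by the centre leaves the centralizer unchanged, so maximality forces K Z = K. *)
  have "card (centralizer G K) > 0"
    using centralizer_subset_carrier subgroup.one_closed[OF centralizer_subgroup[OF Kc]] fin
    by (metis card_gt_0_iff empty_iff finite_subset)
  moreover have "cd_measure G ?KZ \<le> cd_measure G K"
    using cd_measure_le_cd_max[OF fin KZ] K_max by simp
  ultimately have "card ?KZ \<le> card K"
    by (simp add: cd_measure_def centralizer_set_mult_center[OF Kc])
  then have "K = ?KZ"
    using card_subset_eq[OF \<open>finite ?KZ\<close> \<open>K \<subseteq> ?KZ\<close>] card_mono[OF \<open>finite ?KZ\<close> \<open>K \<subseteq> ?KZ\<close>]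
    by simp
  then show ?thesis
    using subset_set_mult_right[OF subgroup.subset[OF center_subgroup] subgroup.one_closed[OF K]] by simp
qed

end

locale center_supplement = group +
  fixes H
  assumes subgroup_supplement: "subgroup H G"
    and carrier_eq_supplement_mult_center: "carrier G = H <#> center G"
begin

lemma supplement_subset_carrier: "H \<subseteq> carrier G"
  using subgroup.subset[OF subgroup_supplement] .

lemma group_supplement: "group (G\<lparr>carrier := H\<rparr>)"
  using subgroup_imp_group[OF subgroup_supplement] .

lemma centralizer_supplement: "centralizer G H = center G"
proof -
  have "centralizer G H = centralizer G (H <#> center G)"
    by (rule centralizer_set_mult_center[OF supplement_subset_carrier, symmetric])
  also have "\<dots> = centralizer G (carrier G)"
    by (simp only: carrier_eq_supplement_mult_center[symmetric])
  finally show ?thesis unfolding center_def .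
qed

lemma center_restrict_supplement: "center (G\<lparr>carrier := H\<rparr>) = center G \<inter> H"
  using centralizer_restrict[OF supplement_subset_carrier, of H] centralizer_supplement
  by (simp add: center_def)

lemma subgroup_eq_Int_supplement_mult_center:
  assumes K: "subgroup K G" and "center G \<subseteq> K"
  shows "K = (K \<inter> H) <#> center G"
proof -
  have "K = (H <#> center G) \<inter> K"
    using subgroup.subset[OF K] carrier_eq_supplement_mult_center by blast
  also have "\<dots> = (H \<inter> K) <#> center G"
    by (rule dedekind_modular_law_right[OF K assms(2) supplement_subset_carrier])
  finally show ?thesis by (simp add: Int_commute)
qed

lemma set_mult_center_Int_supplement:
  assumes K: "subgroup K G" and "K \<subseteq> H" and "center G \<inter> H \<subseteq> K"
  shows "(K <#> center G) \<inter> H = K"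
proof -
  have "(K <#> center G) \<inter> H = K <#> (center G \<inter> H)"
    by (rule dedekind_modular_law_left[OF subgroup_supplement assms(2) subgroup.subset[OF center_subgroup]])
  also have "\<dots> = K"
    using set_mult_subgroup_idem[OF K]
      subgroup_incl[OF subgroups_Inter_pair[OF center_subgroup subgroup_supplement] K assms(3)] .
  finally show ?thesis .
qed

lemma centralizer_eq_restrict_mult_center:
  assumes "S \<subseteq> H"
  shows "centralizer G S = centralizer (G\<lparr>carrier := H\<rparr>) S <#> center G"
proof -
  have S: "S \<subseteq> carrier G" using assms supplement_subset_carrier by auto
  show ?thesis
    using subgroup_eq_Int_supplement_mult_center[OF centralizer_subgroup[OF S] center_subset_centralizer[OF S]]
      centralizer_restrict[OF supplement_subset_carrier]
    by simp
qed

lemma generate_Int_supplement: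
  assumes U: "subgroup U G" "center G \<subseteq> U" and V: "subgroup V G" "center G \<subseteq> V"
  shows "generate G (U \<union> V) \<inter> H = generate (G\<lparr>carrier := H\<rparr>) (U \<inter> H \<union> V \<inter> H)"
proof -
  let ?S = "generate G (U \<inter> H \<union> V \<inter> H)"
  have S: "subgroup ?S G"
    by (rule generate_is_subgroup) (use supplement_subset_carrier in auto)
  have S_H: "?S \<subseteq> H"
    by (rule generate_subgroup_incl[OF _ subgroup_supplement]) auto
  have gens_S: "U \<inter> H \<union> V \<inter> H \<subseteq> ?S"
    by (auto intro: generate.incl)
  have "generate G (U \<union> V) \<subseteq> ?S <#> center G"
  proof (rule generate_subgroup_incl[OF _ set_mult_center_subgroup[OF S]])
    have "U = (U \<inter> H) <#> center G" "V = (V \<inter> H) <#> center G"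
      using subgroup_eq_Int_supplement_mult_center U V by auto
    then show "U \<union> V \<subseteq> ?S <#> center G"
      using gens_S mono_set_mult[of _ ?S "center G" "center G" G] by (metis Un_subset_iff subset_refl)
  qed
  moreover have "(?S <#> center G) \<inter> H = ?S"
    using set_mult_center_Int_supplement[OF S S_H] gens_S U(2) by blast
  moreover have "?S \<subseteq> generate G (U \<union> V)"
    by (rule mono_generate) auto
  ultimately have "generate G (U \<union> V) \<inter> H = ?S"
    using S_H by blast
  then show ?thesis
    using generate_consistent[OF _ subgroup_supplement] by simp
qed

end

locale finite_center_supplement = center_supplement +
  assumes finite_carrier: "finite (carrier G)"
begin

lemma finite_supplement: "finite (carrier (G\<lparr>carrier := H\<rparr>))"
  using finite_subset[OF supplement_subset_carrier finite_carrier] by simp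

lemma card_center_gt_0: "0 < card (center G)" "0 < card (center G \<inter> H)"
  using subgroup.one_closed[OF center_subgroup] subgroup.one_closed[OF subgroup_supplement]
    finite_subset[OF subgroup.subset[OF center_subgroup] finite_carrier]
  by (auto simp: card_gt_0_iff)

lemma cd_measure_supplement:
  assumes K: "subgroup K G" and Z_K: "center G \<subseteq> K"
  shows "cd_measure G K * card (center G \<inter> H)^2
       = cd_measure (G\<lparr>carrier := H\<rparr>) (K \<inter> H) * card (center G)^2"
proof -
  let ?L = "K \<inter> H" and ?C = "centralizer (G\<lparr>carrier := H\<rparr>) (K \<inter> H)"
  have L: "subgroup ?L G" using subgroups_Inter_pair[OF K subgroup_supplement] .
  have L_carrier: "?L \<subseteq> carrier G" using subgroup.subset[OF L] .
  have C_eq: "?C = centralizer G ?L \<inter> H"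
    using centralizer_restrict[OF supplement_subset_carrier] .
  have C: "subgroup ?C G"
    unfolding C_eq by (rule subgroups_Inter_pair[OF centralizer_subgroup[OF L_carrier] subgroup_supplement])
  have fin: "finite ?L" "finite ?C" "finite (center G)"
    using L C center_subgroup by (auto intro: finite_subset[OF subgroup.subset finite_carrier])
  have K_eq: "K = ?L <#> center G"
    using subgroup_eq_Int_supplement_mult_center[OF K Z_K] .
  have "centralizer G K = centralizer G ?L"
    by (subst K_eq) (rule centralizer_set_mult_center[OF L_carrier])
  also have "\<dots> = ?C <#> center G"
    by (rule centralizer_eq_restrict_mult_center) simp
  finally have CK_eq: "centralizer G K = ?C <#> center G" .
  have "?L \<inter> center G = center G \<inter> H" using Z_K by auto
  then have card_K: "card K * card (center G \<inter> H) = card ?L * card (center G)"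
    using card_set_mult_Int[OF L center_subgroup fin(1,3)] K_eq by simp
  have "?C \<inter> center G = center G \<inter> H"
    using C_eq center_subset_centralizer[OF L_carrier] by auto
  then have card_CK: "card (centralizer G K) * card (center G \<inter> H) = card ?C * card (center G)"
    using card_set_mult_Int[OF C center_subgroup fin(2,3)] CK_eq by simp
  have "cd_measure G K * card (center G \<inter> H)^2
      = (card K * card (center G \<inter> H)) * (card (centralizer G K) * card (center G \<inter> H))"
    by (simp add: cd_measure_def power2_eq_square mult_ac)
  also have "\<dots> = (card ?L * card (center G)) * (card ?C * card (center G))"
    by (simp only: card_K card_CK)
  also have "\<dots> = cd_measure (G\<lparr>carrier := H\<rparr>) ?L * card (center G)^2"
    by (simp add: cd_measure_def power2_eq_square mult_ac)
  finally show ?thesis .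
qed

lemma center_Int_supplement_subset_CD:
  "K \<in> CD (G\<lparr>carrier := H\<rparr>) \<Longrightarrow> center G \<inter> H \<subseteq> K"
  using group.center_subset_CD[OF group_supplement finite_supplement] center_restrict_supplement
  by simp

lemma cd_max_supplement:
  "cd_max G * card (center G \<inter> H)^2 = cd_max (G\<lparr>carrier := H\<rparr>) * card (center G)^2"
proof (rule antisym)
  obtain K where K: "K \<in> CD G" using CD_nonempty[OF finite_carrier] by blast
  then have K_sub: "subgroup K G" and K_max: "cd_measure G K = cd_max G"
    by (simp_all add: CD_def)
  have "cd_max G * card (center G \<inter> H)^2
      = cd_measure (G\<lparr>carrier := H\<rparr>) (K \<inter> H) * card (center G)^2"
    using cd_measure_supplement[OF K_sub center_subset_CD[OF finite_carrier K]] K_max by simp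
  also have "\<dots> \<le> cd_max (G\<lparr>carrier := H\<rparr>) * card (center G)^2"
    using group.cd_measure_le_cd_max[OF group_supplement finite_supplement]
      subgroup_restrict_iff[OF subgroup_supplement] subgroups_Inter_pair[OF K_sub subgroup_supplement]
    by simp
  finally show "cd_max G * card (center G \<inter> H)^2 \<le> cd_max (G\<lparr>carrier := H\<rparr>) * card (center G)^2" .
next
  obtain L where L: "L \<in> CD (G\<lparr>carrier := H\<rparr>)"
    using group.CD_nonempty[OF group_supplement finite_supplement] by blast
  then have L_sub: "subgroup L G" "L \<subseteq> H"
    and L_max: "cd_measure (G\<lparr>carrier := H\<rparr>) L = cd_max (G\<lparr>carrier := H\<rparr>)"
    using subgroup_restrict_iff[OF subgroup_supplement] by (simp_all add: CD_def)
  let ?K = "L <#> center G"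
  have K: "subgroup ?K G" using set_mult_center_subgroup[OF L_sub(1)] .
  have Z_K: "center G \<subseteq> ?K"
    using subset_set_mult_right[OF subgroup.subset[OF center_subgroup] subgroup.one_closed[OF L_sub(1)]] .
  have "?K \<inter> H = L"
    using set_mult_center_Int_supplement[OF L_sub center_Int_supplement_subset_CD[OF L]] .
  then have "cd_max (G\<lparr>carrier := H\<rparr>) * card (center G)^2 = cd_measure G ?K * card (center G \<inter> H)^2"
    using cd_measure_supplement[OF K Z_K] L_max by simp
  also have "\<dots> \<le> cd_max G * card (center G \<inter> H)^2"
    using cd_measure_le_cd_max[OF finite_carrier K] by simp
  finally show "cd_max (G\<lparr>carrier := H\<rparr>) * card (center G)^2 \<le> cd_max G * card (center G \<inter> H)^2" .
qed

lemma CD_iff_Int_supplement_CD: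
  assumes K: "subgroup K G" and "center G \<subseteq> K"
  shows "K \<in> CD G \<longleftrightarrow> K \<inter> H \<in> CD (G\<lparr>carrier := H\<rparr>)"
proof -
  have "cd_measure G K = cd_max G
      \<longleftrightarrow> cd_measure G K * card (center G \<inter> H)^2 = cd_max G * card (center G \<inter> H)^2"
    using card_center_gt_0(2) by simp
  also have "\<dots> \<longleftrightarrow> cd_measure (G\<lparr>carrier := H\<rparr>) (K \<inter> H) * card (center G)^2
                    = cd_max (G\<lparr>carrier := H\<rparr>) * card (center G)^2"
    by (simp only: cd_measure_supplement[OF assms] cd_max_supplement)
  also have "\<dots> \<longleftrightarrow> cd_measure (G\<lparr>carrier := H\<rparr>) (K \<inter> H) = cd_max (G\<lparr>carrier := H\<rparr>)"
    using card_center_gt_0(1) by simp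
  finally show ?thesis
    using K subgroup_restrict_iff[OF subgroup_supplement] subgroups_Inter_pair[OF K subgroup_supplement]
    by (simp add: CD_def)
qed

lemma CD_Int_supplement:
  assumes "K \<in> CD G"
  shows "K \<inter> H \<in> CD (G\<lparr>carrier := H\<rparr>)" and "(K \<inter> H) <#> center G = K"
proof -
  have K: "subgroup K G" and Z_K: "center G \<subseteq> K"
    using assms center_subset_CD[OF finite_carrier] by (auto simp: CD_def)
  show "K \<inter> H \<in> CD (G\<lparr>carrier := H\<rparr>)"
    using assms CD_iff_Int_supplement_CD[OF K Z_K] by simp
  show "(K \<inter> H) <#> center G = K"
    using subgroup_eq_Int_supplement_mult_center[OF K Z_K] by simp
qed

lemma CD_supplement_set_mult_center:
  assumes "L \<in> CD (G\<lparr>carrier := H\<rparr>)"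
  shows "L <#> center G \<in> CD G" and "(L <#> center G) \<inter> H = L"
proof -
  have L: "subgroup L G" "L \<subseteq> H"
    using assms subgroup_restrict_iff[OF subgroup_supplement] by (auto simp: CD_def)
  show L_eq: "(L <#> center G) \<inter> H = L"
    using set_mult_center_Int_supplement[OF L center_Int_supplement_subset_CD[OF assms]] .
  have "center G \<subseteq> L <#> center G"
    using subset_set_mult_right[OF subgroup.subset[OF center_subgroup] subgroup.one_closed[OF L(1)]] .
  then show "L <#> center G \<in> CD G"
    using CD_iff_Int_supplement_CD[OF set_mult_center_subgroup[OF L(1)]] L_eq assms by simp
qed

lemma CD_eq_image_set_mult_center:
  "CD G = (\<lambda>L. L <#> center G) ` CD (G\<lparr>carrier := H\<rparr>)"
  using CD_Int_supplement CD_supplement_set_mult_center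
  by (auto intro: rev_image_eqI)

lemma subgroup_lattice_iso_CD:
  "subgroup_lattice_iso G (G\<lparr>carrier := H\<rparr>) (CD G) (CD (G\<lparr>carrier := H\<rparr>)) (\<lambda>K. K \<inter> H)"
proof -
  have "bij_betw (\<lambda>K. K \<inter> H) (CD G) (CD (G\<lparr>carrier := H\<rparr>))"
    by (rule bij_betw_byWitness[where f' = "\<lambda>L. L <#> center G"])
      (use CD_Int_supplement CD_supplement_set_mult_center in auto)
  moreover have "generate G (U \<union> V) \<inter> H = generate (G\<lparr>carrier := H\<rparr>) (U \<inter> H \<union> V \<inter> H)"
    if "U \<in> CD G" "V \<in> CD G" for U V
    using that generate_Int_supplement center_subset_CD[OF finite_carrier] by (simp add: CD_def)
  ultimately show ?thesis
    unfolding subgroup_lattice_iso_def by auto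
qed

end

theorem proposition3p5:
  fixes G :: "('a, 'b) monoid_scheme" and H :: "'a set"
  assumes "group G"
    and "finite (carrier G)"
    and "subgroup H G"
    and "carrier G = H <#>\<^bsub>G\<^esub> center G"
  shows "(\<exists>f. subgroup_lattice_iso G (G\<lparr>carrier := H\<rparr>) (CD G) (CD (G\<lparr>carrier := H\<rparr>)) f)
         \<and> CD G = (\<lambda>K. K <#>\<^bsub>G\<^esub> center G) ` CD (G\<lparr>carrier := H\<rparr>)"
proof -
  interpret finite_center_supplement G H
    using assms unfolding finite_center_supplement_def finite_center_supplement_axioms_def
      center_supplement_def center_supplement_axioms_def by blast
  show ?thesis
    using subgroup_lattice_iso_CD CD_eq_image_set_mult_center by blast
qed

end
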